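(* Let $S$ be a semigroup and $a\in S$ an idempotent with $aSa\subseteq\operatorname{Reg}(S)$; let $P=\{x\in Sa: x\,\mathscr L\,ax\}$, let $H_a$ be the $\mathscr H$-class of $a$ in $S$ (which is the group of units of the monoid $aSa$), and let $\rho$ be the number of $\mathscr R^P$-classes contained in $\widehat R^a_a=\{x\in P: ax\ \mathscr R^{aSa}\ a\}$. Suppose $aSa\setminus H_a$ is an ideal of $aSa$. Then $$\operatorname{rank}(P)\ge \operatorname{rank}(aSa:H_a)+\max(\rho,\operatorname{rank}(H_a)),$$ with equality if $P$ is RI-dominated.
   Context: $P$ is a (regular) subsemigroup of $S$. $\mathscr R^P$, $\mathscr R^{aSa}$ denote Green's $\mathscr R$-relation in $P$ and in $aSa$. For a semigroup $T$, $\operatorname{rank}(T)$ is the minimum cardinality of a generating set, and for $A\subseteq T$, the relative rank $\operatorname{rank}(T:A)$ is the minimum cardinality of $U\subseteq T$ with $T=\langle A\cup U\rangle$. A semigroup $T$ is RI-dominated if for every $x\in T$ there is a right identity $e$ of $T$ (i.e. $ye=y$ for all $y\in T$) with $x\in eT^1$. *)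

theory Defs
  imports Main
begin

text \<open>Semigroup notions. The ambient semigroup S is the whole type 'a (class semigroup_mult);
  subsemigroups are subsets closed under multiplication.\<close>

inductive_set sgp_gen :: "'a::semigroup_mult set \<Rightarrow> 'a set" for U where
  base: "u \<in> U \<Longrightarrow> u \<in> sgp_gen U"
| mult: "x \<in> sgp_gen U \<Longrightarrow> y \<in> sgp_gen U \<Longrightarrow> x * y \<in> sgp_gen U"

definition subsemigroup :: "'a::semigroup_mult set \<Rightarrow> bool" where
  "subsemigroup T \<longleftrightarrow> (\<forall>x\<in>T. \<forall>y\<in>T. x * y \<in> T)"

definition rideal1 :: "'a::semigroup_mult set \<Rightarrow> 'a \<Rightarrow> 'a set" where
  "rideal1 T x = insert x {x * t | t. t \<in> T}"

definition lideal1 :: "'a::semigroup_mult set \<Rightarrow> 'a \<Rightarrow> 'a set" where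
  "lideal1 T x = insert x {t * x | t. t \<in> T}"

definition greenR :: "'a::semigroup_mult set \<Rightarrow> 'a \<Rightarrow> 'a \<Rightarrow> bool" where
  "greenR T x y \<longleftrightarrow> x \<in> T \<and> y \<in> T \<and> rideal1 T x = rideal1 T y"

definition greenL :: "'a::semigroup_mult set \<Rightarrow> 'a \<Rightarrow> 'a \<Rightarrow> bool" where
  "greenL T x y \<longleftrightarrow> x \<in> T \<and> y \<in> T \<and> lideal1 T x = lideal1 T y"

definition greenH :: "'a::semigroup_mult set \<Rightarrow> 'a \<Rightarrow> 'a \<Rightarrow> bool" where
  "greenH T x y \<longleftrightarrow> greenR T x y \<and> greenL T x y"

definition regular_elem :: "'a::semigroup_mult \<Rightarrow> bool" where
  "regular_elem x \<longleftrightarrow> (\<exists>y. x * y * x = x)"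

definition Reg :: "'a::semigroup_mult set" where
  "Reg = {x. regular_elem x}"

definition ideal_of :: "'a::semigroup_mult set \<Rightarrow> 'a set \<Rightarrow> bool" where
  "ideal_of T I \<longleftrightarrow> I \<subseteq> T \<and> (\<forall>x\<in>I. \<forall>t\<in>T. x * t \<in> I \<and> t * x \<in> I)"

definition srank :: "'a::semigroup_mult set \<Rightarrow> 'a rel" where
  "srank T = card_of (SOME U. U \<subseteq> T \<and> sgp_gen U = T \<and>
      (\<forall>V. V \<subseteq> T \<and> sgp_gen V = T \<longrightarrow> ordLeq3 (card_of U) (card_of V)))"

definition relrank :: "'a::semigroup_mult set \<Rightarrow> 'a set \<Rightarrow> 'a rel" where
  "relrank T A = card_of (SOME U. U \<subseteq> T \<and> sgp_gen (A \<union> U) = T \<and>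
      (\<forall>V. V \<subseteq> T \<and> sgp_gen (A \<union> V) = T \<longrightarrow> ordLeq3 (card_of U) (card_of V)))"

definition right_identity :: "'a::semigroup_mult set \<Rightarrow> 'a \<Rightarrow> bool" where
  "right_identity T e \<longleftrightarrow> e \<in> T \<and> (\<forall>y\<in>T. y * e = y)"

definition RI_dominated :: "'a::semigroup_mult set \<Rightarrow> bool" where
  "RI_dominated T \<longleftrightarrow> (\<forall>x\<in>T. \<exists>e. right_identity T e \<and> x \<in> rideal1 T e)"

text \<open>Cardinal comparisons with  x + max(y, z)  (cardinal sum and maximum).\<close>
definition csum_max_leq :: "'a rel \<Rightarrow> 'b rel \<Rightarrow> 'c rel \<Rightarrow> 'd rel \<Rightarrow> bool" where
  "csum_max_leq x y z d \<longleftrightarrow>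
     (if ordLeq3 y z then ordLeq3 (BNF_Cardinal_Arithmetic.csum x z) d
      else ordLeq3 (BNF_Cardinal_Arithmetic.csum x y) d)"

definition csum_max_iso :: "'a rel \<Rightarrow> 'b rel \<Rightarrow> 'c rel \<Rightarrow> 'd rel \<Rightarrow> bool" where
  "csum_max_iso x y z d \<longleftrightarrow>
     (if ordLeq3 y z then ordIso2 d (BNF_Cardinal_Arithmetic.csum x z)
      else ordIso2 d (BNF_Cardinal_Arithmetic.csum x y))"

definition aSa_of :: "'a::semigroup_mult \<Rightarrow> 'a set" where
  "aSa_of a = {a * s * a | s. True}"

definition P_of :: "'a::semigroup_mult \<Rightarrow> 'a set" where
  "P_of a = {x. (\<exists>s. x = s * a) \<and> greenL UNIV x (a * x)}"

definition H_of :: "'a::semigroup_mult \<Rightarrow> 'a set" where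
  "H_of a = {x. greenH UNIV x a}"

definition Rhat_of :: "'a::semigroup_mult \<Rightarrow> 'a set" where
  "Rhat_of a = {x \<in> P_of a. greenR (aSa_of a) (a * x) a}"

definition RP_classes_in_Rhat :: "'a::semigroup_mult \<Rightarrow> 'a set set" where
  "RP_classes_in_Rhat a =
     {C. (\<exists>x\<in>P_of a. C = {y. greenR (P_of a) x y}) \<and> C \<subseteq> Rhat_of a}"

end

theory Submission
  imports Defs
begin

text \<open>The map \<open>x \<mapsto> ax\<close> is a homomorphism from \<open>P\<close> onto \<open>aSa\<close> sending exactly the elements
  of \<open>Rhat\<close> to units, and \<open>aSa - H\<^sub>a\<close> being an ideal means a product of elements of \<open>aSa\<close>
  is a unit only if both factors are.  Hence a generating set \<open>U\<close> of \<open>P\<close> splits into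
  \<open>U - Rhat\<close>, whose image generates \<open>aSa\<close> modulo \<open>H\<^sub>a\<close>, and \<open>U \<inter> Rhat\<close>, whose image
  generates \<open>H\<^sub>a\<close> and which meets every \<open>\<R>\<^sup>P\<close>-class in \<open>Rhat\<close> (the first letter of a word
  in that class).  Conversely, if \<open>P\<close> is RI-dominated, then a relative generating set of
  \<open>aSa\<close> together with \<open>max(\<rho>, rank H\<^sub>a)\<close> products \<open>e\<^sub>k x\<^sub>k\<close>, pairing representatives
  \<open>e\<^sub>k\<close> (with \<open>ae\<^sub>k = a\<close>, one of them \<open>a\<close> itself) of the \<open>\<R>\<^sup>P\<close>-classes in \<open>Rhat\<close> with
  generators \<open>x\<^sub>k\<close> of \<open>H\<^sub>a\<close>, generates \<open>P\<close>.\<close>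

unbundle cardinal_syntax

lemma sgp_gen_least: "U \<subseteq> T \<Longrightarrow> subsemigroup T \<Longrightarrow> sgp_gen U \<subseteq> T"
proof
  fix x assume "x \<in> sgp_gen U" "U \<subseteq> T" "subsemigroup T"
  then show "x \<in> T"
    by (induction rule: sgp_gen.induct) (auto simp: subsemigroup_def)
qed

lemma sgp_gen_superset: "U \<subseteq> sgp_gen U"
  using sgp_gen.base by blast

lemma subsemigroup_sgp_gen: "subsemigroup (sgp_gen U)"
  unfolding subsemigroup_def using sgp_gen.mult by blast

lemma sgp_gen_mono: "U \<subseteq> V \<Longrightarrow> sgp_gen U \<subseteq> sgp_gen V"
  using sgp_gen_least[OF _ subsemigroup_sgp_gen] sgp_gen_superset by blast

lemma sgp_gen_subsemigroup: "subsemigroup T \<Longrightarrow> sgp_gen T = T"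
  using sgp_gen_least sgp_gen_superset by blast

lemma sgp_gen_empty: "sgp_gen {} = {}"
  using sgp_gen_least[of "{}" "{}"] by (auto simp: subsemigroup_def)

lemma sgp_gen_hom_image:
  assumes hom: "\<And>x y. x \<in> T \<Longrightarrow> y \<in> T \<Longrightarrow> f (x * y) = f x * f y"
    and T: "subsemigroup T" "U \<subseteq> T"
    and x: "x \<in> sgp_gen U"
  shows "f x \<in> sgp_gen (f ` U)"
  using x
proof (induction rule: sgp_gen.induct)
  case (mult x y)
  then have "x \<in> T" "y \<in> T" using sgp_gen_least[OF T(2,1)] by blast+
  then show ?case using mult.IH hom sgp_gen.mult by metis
qed (simp add: sgp_gen.base)

lemma sgp_gen_hom_filter:
  assumes hom: "\<And>x y. x \<in> T \<Longrightarrow> y \<in> T \<Longrightarrow> f (x * y) = f x * f y"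
    and T: "subsemigroup T" "U \<subseteq> T"
    and filter: "\<And>x y. x \<in> T \<Longrightarrow> y \<in> T \<Longrightarrow> f x * f y \<in> F \<Longrightarrow> f x \<in> F \<and> f y \<in> F"
    and x: "x \<in> sgp_gen U" "f x \<in> F"
  shows "x \<in> sgp_gen {u \<in> U. f u \<in> F}"
  using x
proof (induction rule: sgp_gen.induct)
  case (mult x y)
  then have "x \<in> T" "y \<in> T" using sgp_gen_least[OF T(2,1)] by blast+
  with mult.prems have "f x \<in> F" "f y \<in> F" using hom filter by metis+
  then show ?case using mult.IH sgp_gen.mult by blast
qed (simp add: sgp_gen.base)

lemma rideal1_refl: "x \<in> rideal1 T x"
  unfolding rideal1_def by simp

lemma rideal1_trans:
  "subsemigroup T \<Longrightarrow> x \<in> rideal1 T y \<Longrightarrow> y \<in> rideal1 T z \<Longrightarrow> x \<in> rideal1 T z"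
  unfolding rideal1_def subsemigroup_def by (auto simp: mult.assoc)

lemma rideal1_eq_iff:
  "subsemigroup T \<Longrightarrow> rideal1 T x = rideal1 T y \<longleftrightarrow> x \<in> rideal1 T y \<and> y \<in> rideal1 T x"
  using rideal1_trans rideal1_refl by blast

lemma lideal1_refl: "x \<in> lideal1 T x"
  unfolding lideal1_def by simp

lemma lideal1_trans:
  "subsemigroup T \<Longrightarrow> x \<in> lideal1 T y \<Longrightarrow> y \<in> lideal1 T z \<Longrightarrow> x \<in> lideal1 T z"
  unfolding lideal1_def subsemigroup_def by (auto simp: mult.assoc) (metis mult.assoc)

lemma lideal1_eq_iff:
  "subsemigroup T \<Longrightarrow> lideal1 T x = lideal1 T y \<longleftrightarrow> x \<in> lideal1 T y \<and> y \<in> lideal1 T x"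
  using lideal1_trans lideal1_refl by blast

lemma subsemigroup_UNIV: "subsemigroup UNIV"
  unfolding subsemigroup_def by simp

lemma greenR_iff:
  "subsemigroup T \<Longrightarrow>
    greenR T x y \<longleftrightarrow> x \<in> T \<and> y \<in> T \<and> x \<in> rideal1 T y \<and> y \<in> rideal1 T x"
  unfolding greenR_def using rideal1_eq_iff by blast

lemma greenR_refl: "x \<in> T \<Longrightarrow> greenR T x x"
  unfolding greenR_def by simp

lemma greenR_trans: "greenR T x y \<Longrightarrow> greenR T y z \<Longrightarrow> greenR T x z"
  unfolding greenR_def by simp

lemma greenR_class_eq: "greenR T x y \<Longrightarrow> {z. greenR T x z} = {z. greenR T y z}"
  unfolding greenR_def by auto

text \<open>The witness is the first letter of a word over \<open>V\<close> representing \<open>x\<close>.\<close>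
lemma sgp_gen_greenR_generator:
  assumes R: "subsemigroup R" "V \<subseteq> R" "R \<subseteq> T"
    and right_mult: "\<And>x y. x \<in> T \<Longrightarrow> y \<in> R \<Longrightarrow> greenR T x (x * y)"
    and x: "x \<in> sgp_gen V"
  shows "\<exists>v\<in>V. greenR T v x"
  using x
proof (induction rule: sgp_gen.induct)
  case (base u)
  then show ?case using R greenR_refl by blast
next
  case (mult x y)
  then have "x \<in> T" "y \<in> R" using sgp_gen_least[OF R(2,1)] R(3) by blast+
  then show ?case using mult.IH(1) right_mult greenR_trans by blast
qed

lemma someI_card_minimal:
  assumes "Q A"
  defines "U \<equiv> SOME U. Q U \<and> (\<forall>V. Q V \<longrightarrow> |U| \<le>o |V| )"
  shows "Q U" and "\<And>V. Q V \<Longrightarrow> |U| \<le>o |V|"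
proof -
  have "\<exists>U. Q U \<and> (\<forall>V. Q V \<longrightarrow> |U| \<le>o |V| )"
  proof -
    have ne: "{|U| |U. Q U} \<noteq> {}" using assms by blast
    have "\<forall>r\<in>{|U| |U. Q U}. Well_order r" using card_of_Well_order by blast
    then obtain r where "r \<in> {|U| |U. Q U}" "\<forall>r'\<in>{|U| |U. Q U}. r \<le>o r'"
      using exists_minim_Well_order[OF ne] by blast
    then show ?thesis by blast
  qed
  then have "Q U \<and> (\<forall>V. Q V \<longrightarrow> |U| \<le>o |V| )"
    unfolding U_def by (rule someI_ex)
  then show "Q U" and "\<And>V. Q V \<Longrightarrow> |U| \<le>o |V|" by blast+
qed

lemma srank_eq_minimal:
  fixes T :: "'a::semigroup_mult set"
  defines "Q \<equiv> \<lambda>U. U \<subseteq> T \<and> sgp_gen U = T"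
  shows "srank T = |SOME U. Q U \<and> (\<forall>V. Q V \<longrightarrow> |U| \<le>o |V| )|"
  unfolding srank_def Q_def by (simp only: conj_assoc)

lemma relrank_eq_minimal:
  fixes T A :: "'a::semigroup_mult set"
  defines "Q \<equiv> \<lambda>U. U \<subseteq> T \<and> sgp_gen (A \<union> U) = T"
  shows "relrank T A = |SOME U. Q U \<and> (\<forall>V. Q V \<longrightarrow> |U| \<le>o |V| )|"
  unfolding relrank_def Q_def by (simp only: conj_assoc)

lemma srank_le: "V \<subseteq> T \<Longrightarrow> sgp_gen V = T \<Longrightarrow> srank T \<le>o |V|"
  unfolding srank_eq_minimal by (rule someI_card_minimal(2)) blast+

lemma srank_attained:
  assumes "subsemigroup T"
  shows "\<exists>U\<subseteq>T. sgp_gen U = T \<and> srank T = |U|"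
proof -
  have "T \<subseteq> T \<and> sgp_gen T = T" using sgp_gen_subsemigroup[OF assms] by simp
  from someI_card_minimal(1)[of "\<lambda>U. U \<subseteq> T \<and> sgp_gen U = T", OF this]
  show ?thesis unfolding srank_eq_minimal by blast
qed

lemma relrank_le: "V \<subseteq> T \<Longrightarrow> sgp_gen (A \<union> V) = T \<Longrightarrow> relrank T A \<le>o |V|"
  unfolding relrank_eq_minimal by (rule someI_card_minimal(2)) blast+

lemma relrank_attained:
  assumes "A \<subseteq> T" "subsemigroup T"
  shows "\<exists>U\<subseteq>T. sgp_gen (A \<union> U) = T \<and> relrank T A = |U|"
proof -
  have "A \<union> T = T" using assms(1) by blast
  then have "T \<subseteq> T \<and> sgp_gen (A \<union> T) = T" using sgp_gen_subsemigroup[OF assms(2)] by simp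
  from someI_card_minimal(1)[of "\<lambda>U. U \<subseteq> T \<and> sgp_gen (A \<union> U) = T", OF this]
  show ?thesis unfolding relrank_eq_minimal by blast
qed

lemma csum_card_of_Diff_Int: "|A - B| +c |A \<inter> B| \<le>o |A|"
proof -
  have "inj_on (case_sum id id) ((A - B) <+> (A \<inter> B))"
    unfolding inj_on_def by auto
  moreover have "case_sum id id ` ((A - B) <+> (A \<inter> B)) \<subseteq> A" by auto
  ultimately have "|(A - B) <+> (A \<inter> B)| \<le>o |A|" using card_of_ordLeq by blast
  then show ?thesis using Plus_csum ordIso_ordLeq_trans ordIso_symmetric by blast
qed

locale idempotent_elem =
  fixes a :: "'a::semigroup_mult"
  assumes idem: "a * a = a"
begin

lemma a_mult_a_mult: "a * (a * x) = a * x"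
  by (simp add: idem mult.assoc[symmetric])

lemma aSa_iff: "w \<in> aSa_of a \<longleftrightarrow> a * w * a = w"
proof
  assume "w \<in> aSa_of a"
  then obtain s where "w = a * s * a" unfolding aSa_of_def by blast
  then show "a * w * a = w" by (simp add: mult.assoc idem a_mult_a_mult)
next
  assume "a * w * a = w"
  then show "w \<in> aSa_of a" unfolding aSa_of_def by (intro CollectI exI[of _ w]) simp
qed

lemma a_in_aSa: "a \<in> aSa_of a"
  by (simp add: aSa_iff idem)

lemma aSa_left_id: "w \<in> aSa_of a \<Longrightarrow> a * w = w"
proof -
  assume "w \<in> aSa_of a"
  then have "a * w * a = w" by (simp add: aSa_iff)
  moreover have "a * (a * w * a) = a * w * a" by (simp add: mult.assoc a_mult_a_mult)
  ultimately show "a * w = w" by simp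
qed

lemma aSa_right_id: "w \<in> aSa_of a \<Longrightarrow> w * a = w"
proof -
  assume "w \<in> aSa_of a"
  then have "a * w * a = w" by (simp add: aSa_iff)
  moreover have "a * w * a * a = a * w * a" by (simp add: mult.assoc idem)
  ultimately show "w * a = w" by simp
qed

lemma aSa_mult:
  assumes "x \<in> aSa_of a" "y \<in> aSa_of a"
  shows "x * y \<in> aSa_of a"
proof -
  have "a * (x * y) * a = (a * x) * (y * a)" by (simp add: mult.assoc)
  also have "\<dots> = x * y" using assms aSa_left_id aSa_right_id by simp
  finally show ?thesis unfolding aSa_iff .
qed

lemma subsemigroup_aSa: "subsemigroup (aSa_of a)"
  unfolding subsemigroup_def using aSa_mult by blast

lemma P_iff: "x \<in> P_of a \<longleftrightarrow> x * a = x \<and> (\<exists>t. x = t * (a * x))"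
proof -
  have "a * x \<in> lideal1 UNIV x" unfolding lideal1_def by blast
  then have "greenL UNIV x (a * x) \<longleftrightarrow> x \<in> lideal1 UNIV (a * x)"
    unfolding greenL_def using lideal1_eq_iff[OF subsemigroup_UNIV] by blast
  also have "\<dots> \<longleftrightarrow> (\<exists>t. x = t * (a * x))"
  proof
    assume "x \<in> lideal1 UNIV (a * x)"
    then have "x = a * x \<or> (\<exists>t. x = t * (a * x))" unfolding lideal1_def by blast
    then show "\<exists>t. x = t * (a * x)" using a_mult_a_mult by metis
  qed (auto simp: lideal1_def)
  finally have "greenL UNIV x (a * x) \<longleftrightarrow> (\<exists>t. x = t * (a * x))" .
  moreover have "(\<exists>s. x = s * a) \<longleftrightarrow> x * a = x"
  proof
    assume "\<exists>s. x = s * a"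
    then show "x * a = x" by (auto simp: mult.assoc idem)
  next
    assume "x * a = x"
    then show "\<exists>s. x = s * a" by (intro exI[of _ x]) simp
  qed
  ultimately show ?thesis unfolding P_of_def by blast
qed

lemma P_right_id: "x \<in> P_of a \<Longrightarrow> x * a = x"
  using P_iff by blast

lemma P_mult:
  assumes "x \<in> P_of a" "y \<in> P_of a"
  shows "x * y \<in> P_of a"
proof -
  obtain t where "x = t * (a * x)" using assms(1) P_iff by blast
  then have "x * y = t * (a * x) * y" by (rule arg_cong)
  also have "\<dots> = t * (a * (x * y))" by (simp add: mult.assoc)
  finally have "x * y = t * (a * (x * y))" .
  moreover have "x * y * a = x * y" using assms(2) P_iff by (simp add: mult.assoc)
  ultimately show ?thesis unfolding P_iff by blast
qed

lemma subsemigroup_P: "subsemigroup (P_of a)"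
  unfolding subsemigroup_def using P_mult by blast

lemma aSa_subset_P: "aSa_of a \<subseteq> P_of a"
proof
  fix w assume "w \<in> aSa_of a"
  then have "w * a = w" "w = a * (a * w)" using aSa_left_id aSa_right_id a_mult_a_mult by simp_all
  then show "w \<in> P_of a" unfolding P_iff by blast
qed

lemma a_mult_P_in_aSa: "x \<in> P_of a \<Longrightarrow> a * x \<in> aSa_of a"
  unfolding aSa_iff by (simp add: P_right_id mult.assoc a_mult_a_mult)

lemma a_mult_hom:
  assumes "x \<in> P_of a"
  shows "a * (x * y) = (a * x) * (a * y)"
proof -
  have "a * x * a = a * x" using P_right_id[OF assms] by (simp add: mult.assoc)
  then show ?thesis by (simp add: mult.assoc[symmetric])
qed

lemma mem_rideal1_a_iff: "x \<in> rideal1 UNIV a \<longleftrightarrow> a * x = x"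
  unfolding rideal1_def by (auto simp: idem a_mult_a_mult) metis

lemma a_mem_rideal1_iff: "a \<in> rideal1 UNIV x \<longleftrightarrow> (\<exists>s. x * s = a)"
  unfolding rideal1_def using idem by auto

lemma mem_lideal1_a_iff: "x \<in> lideal1 UNIV a \<longleftrightarrow> x * a = x"
  unfolding lideal1_def by (auto simp: idem mult.assoc) metis

lemma a_mem_lideal1_iff: "a \<in> lideal1 UNIV x \<longleftrightarrow> (\<exists>s. s * x = a)"
  unfolding lideal1_def using idem by auto

lemma greenH_a_iff:
  "greenH UNIV x a \<longleftrightarrow> a * x = x \<and> x * a = x \<and> (\<exists>s. x * s = a) \<and> (\<exists>s. s * x = a)"
  unfolding greenH_def greenR_def greenL_def
    rideal1_eq_iff[OF subsemigroup_UNIV] lideal1_eq_iff[OF subsemigroup_UNIV]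
    mem_rideal1_a_iff a_mem_rideal1_iff mem_lideal1_a_iff a_mem_lideal1_iff by auto

lemma H_iff: "x \<in> H_of a \<longleftrightarrow> x \<in> aSa_of a \<and> (\<exists>y\<in>aSa_of a. x * y = a \<and> y * x = a)"
proof
  assume "x \<in> H_of a"
  then obtain s s' where ax: "a * x = x" and xa: "x * a = x" and s: "x * s = a" and s': "s' * x = a"
    unfolding H_of_def greenH_a_iff by blast
  have x: "x \<in> aSa_of a" unfolding aSa_iff using ax xa by simp
  define y where "y = a * s * a"
  have y: "y \<in> aSa_of a" unfolding y_def aSa_of_def by blast
  have xy: "x * y = a" unfolding y_def using xa s idem by (metis mult.assoc)
  have "y = s' * a" using aSa_left_id[OF y] s' xy by (metis mult.assoc)
  then have "y * x = a" using ax s' by (simp add: mult.assoc)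
  with x y xy show "x \<in> aSa_of a \<and> (\<exists>y\<in>aSa_of a. x * y = a \<and> y * x = a)" by blast
next
  assume "x \<in> aSa_of a \<and> (\<exists>y\<in>aSa_of a. x * y = a \<and> y * x = a)"
  then show "x \<in> H_of a"
    unfolding H_of_def greenH_a_iff using aSa_left_id aSa_right_id by blast
qed

lemma a_in_H: "a \<in> H_of a"
  using H_iff a_in_aSa idem by blast

lemma H_subset_aSa: "H_of a \<subseteq> aSa_of a"
  using H_iff by blast

lemma H_subset_P: "H_of a \<subseteq> P_of a"
  using H_subset_aSa aSa_subset_P by blast

lemma H_inverse: "x \<in> H_of a \<Longrightarrow> \<exists>y\<in>H_of a. x * y = a \<and> y * x = a"
  using H_iff by blast

text \<open>For \<open>g \<in> aSa\<close> and \<open>ae = a\<close> we have \<open>ge = gae = ga = g\<close>, hence \<open>gx = g(ex)\<close>.\<close>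
lemma aSa_mult_sgp_gen_closed:
  assumes X: "X \<subseteq> aSa_of a"
    and twisted: "\<And>x. x \<in> X \<Longrightarrow> \<exists>e. a * e = a \<and> e * x \<in> sgp_gen G"
    and w: "w \<in> sgp_gen X"
  shows "g \<in> sgp_gen G \<Longrightarrow> g \<in> aSa_of a \<Longrightarrow> g * w \<in> sgp_gen G"
  using w
proof (induction arbitrary: g rule: sgp_gen.induct)
  case (base x)
  obtain e where e: "a * e = a" "e * x \<in> sgp_gen G" using twisted base.hyps by blast
  have "g * e = g" using aSa_right_id[OF base.prems(2)] e(1) by (metis mult.assoc)
  then have "g * x = g * (e * x)" by (simp add: mult.assoc[symmetric])
  then show ?case using sgp_gen.mult[OF base.prems(1) e(2)] by simp
next
  case (mult x y)
  have "x \<in> aSa_of a" using sgp_gen_least[OF X subsemigroup_aSa] mult.hyps(1) by blast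
  then have "g * x \<in> sgp_gen G" "g * x \<in> aSa_of a" using mult.IH(1) mult.prems aSa_mult by auto
  then show ?case using mult.IH(2)[of "g * x"] by (simp add: mult.assoc)
qed

end

locale idempotent_nonunits_ideal = idempotent_elem +
  assumes nonunits_ideal: "ideal_of (aSa_of a) (aSa_of a - H_of a)"
begin

lemma H_factors: "x \<in> aSa_of a \<Longrightarrow> y \<in> aSa_of a \<Longrightarrow> x * y \<in> H_of a \<Longrightarrow> x \<in> H_of a \<and> y \<in> H_of a"
  using nonunits_ideal unfolding ideal_of_def by blast

lemma H_mult:
  assumes x: "x \<in> H_of a" and y: "y \<in> H_of a"
  shows "x * y \<in> H_of a"
proof -
  obtain x' where x': "x' \<in> H_of a" "x * x' = a" using H_inverse[OF x] by blast
  obtain y' where y': "y' \<in> H_of a" "y * y' = a" using H_inverse[OF y] by blast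
  have "(x * y) * (y' * x') = x * (y * y') * x'" by (simp add: mult.assoc)
  also have "\<dots> = x * x'" using y'(2) aSa_right_id H_subset_aSa x by auto
  also have "\<dots> = a" by (rule x'(2))
  finally have "(x * y) * (y' * x') \<in> H_of a" using a_in_H by simp
  moreover have "x * y \<in> aSa_of a" "y' * x' \<in> aSa_of a"
    using aSa_mult H_subset_aSa x y x' y' by blast+
  ultimately show ?thesis using H_factors by blast
qed

lemma subsemigroup_H: "subsemigroup (H_of a)"
  unfolding subsemigroup_def using H_mult by blast

lemma greenR_aSa_a_iff:
  assumes w: "w \<in> aSa_of a"
  shows "greenR (aSa_of a) w a \<longleftrightarrow> w \<in> H_of a"
proof
  assume "greenR (aSa_of a) w a"
  then have "a \<in> rideal1 (aSa_of a) w" unfolding greenR_def using rideal1_refl by metis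
  then have "a = w \<or> (\<exists>t\<in>aSa_of a. w * t = a)" unfolding rideal1_def by blast
  then show "w \<in> H_of a" using a_in_H H_factors[OF w] by metis
next
  assume "w \<in> H_of a"
  then obtain g where "g \<in> aSa_of a" "w * g = a" using H_inverse H_subset_aSa by blast
  then have "a \<in> rideal1 (aSa_of a) w" unfolding rideal1_def by blast
  moreover have "w \<in> rideal1 (aSa_of a) a"
    unfolding rideal1_def using w aSa_left_id[OF w, symmetric] by blast
  ultimately show "greenR (aSa_of a) w a"
    unfolding greenR_iff[OF subsemigroup_aSa] using w a_in_aSa by blast
qed

lemma Rhat_iff: "x \<in> Rhat_of a \<longleftrightarrow> x \<in> P_of a \<and> a * x \<in> H_of a"
  unfolding Rhat_of_def using greenR_aSa_a_iff a_mult_P_in_aSa by blast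

lemma Rhat_mult:
  assumes "x \<in> Rhat_of a" "y \<in> Rhat_of a"
  shows "x * y \<in> Rhat_of a"
proof -
  have "x \<in> P_of a" "y \<in> P_of a" "a * x \<in> H_of a" "a * y \<in> H_of a"
    using assms Rhat_iff by auto
  moreover from this have "a * (x * y) = (a * x) * (a * y)" by (simp add: a_mult_hom)
  ultimately show ?thesis unfolding Rhat_iff by (simp add: P_mult H_mult)
qed

lemma subsemigroup_Rhat: "subsemigroup (Rhat_of a)"
  unfolding subsemigroup_def using Rhat_mult by blast

lemma greenR_P_mult_Rhat:
  assumes x: "x \<in> P_of a" and y: "y \<in> Rhat_of a"
  shows "greenR (P_of a) x (x * y)"
proof -
  have yP: "y \<in> P_of a" and ay: "a * y \<in> H_of a" using y Rhat_iff by auto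
  obtain g where g: "g \<in> H_of a" "a * y * g = a" using H_inverse[OF ay] by blast
  have "x * y * g = x * a * y * g" using P_right_id[OF x] by simp
  also have "\<dots> = x * (a * y * g)" by (simp add: mult.assoc)
  also have "\<dots> = x" using g(2) P_right_id[OF x] by simp
  finally have "x = x * y * g" ..
  then have "x \<in> rideal1 (P_of a) (x * y)" unfolding rideal1_def using g(1) H_subset_P by blast
  moreover have "x * y \<in> rideal1 (P_of a) x" unfolding rideal1_def using yP by blast
  ultimately show ?thesis unfolding greenR_iff[OF subsemigroup_P] using x yP P_mult by blast
qed

lemma Rhat_greenR_P_closed:
  assumes x: "x \<in> Rhat_of a" and xy: "greenR (P_of a) x y"
  shows "y \<in> Rhat_of a"
proof -
  have yP: "y \<in> P_of a" and "x \<in> rideal1 (P_of a) y"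
    using xy unfolding greenR_iff[OF subsemigroup_P] by auto
  then have "x = y \<or> (\<exists>q\<in>P_of a. x = y * q)" unfolding rideal1_def by blast
  moreover have "a \<in> P_of a" using aSa_subset_P a_in_aSa by blast
  ultimately obtain q where q: "q \<in> P_of a" "x = y * q" using P_right_id[OF yP] by metis
  have "a * x = (a * y) * (a * q)" using q(2) a_mult_hom[OF yP] by simp
  then have "(a * y) * (a * q) \<in> H_of a" using x Rhat_iff by simp
  then have "a * y \<in> H_of a" using H_factors a_mult_P_in_aSa yP q(1) by blast
  then show ?thesis using yP Rhat_iff by blast
qed

lemma RP_class_in_classes: "x \<in> Rhat_of a \<Longrightarrow> {y. greenR (P_of a) x y} \<in> RP_classes_in_Rhat a"
proof -
  assume x: "x \<in> Rhat_of a"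
  then have "x \<in> P_of a" using Rhat_iff by blast
  moreover have "{y. greenR (P_of a) x y} \<subseteq> Rhat_of a" using Rhat_greenR_P_closed[OF x] by blast
  ultimately show ?thesis unfolding RP_classes_in_Rhat_def by blast
qed

lemma RP_classE:
  assumes "C \<in> RP_classes_in_Rhat a"
  obtains x where "x \<in> Rhat_of a" "C = {y. greenR (P_of a) x y}"
proof -
  obtain x where "x \<in> P_of a" "C = {y. greenR (P_of a) x y}" "C \<subseteq> Rhat_of a"
    using assms unfolding RP_classes_in_Rhat_def by blast
  moreover from this have "x \<in> C" using greenR_refl by blast
  ultimately show ?thesis using that by blast
qed

lemma RP_class_has_elem_fixing_a:
  assumes "C \<in> RP_classes_in_Rhat a"
  shows "\<exists>e\<in>C. a * e = a"
proof -
  obtain x where x: "x \<in> Rhat_of a" and C: "C = {y. greenR (P_of a) x y}"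
    using assms by (rule RP_classE)
  then have xP: "x \<in> P_of a" and "a * x \<in> H_of a" using Rhat_iff by auto
  then obtain g where g: "g \<in> H_of a" "a * x * g = a" using H_inverse by blast
  have ae: "a * (x * g) = a" using g(2) by (simp add: mult.assoc)
  have "g \<in> P_of a" "a * g = g" using g(1) H_subset_P aSa_left_id H_subset_aSa by auto
  then have "g \<in> Rhat_of a" using g(1) Rhat_iff by simp
  then have "greenR (P_of a) x (x * g)" using greenR_P_mult_Rhat xP by blast
  then show ?thesis using C ae by blast
qed

lemma a_mult_sgp_gen: "U \<subseteq> P_of a \<Longrightarrow> x \<in> sgp_gen U \<Longrightarrow> a * x \<in> sgp_gen ((*) a ` U)"
  using sgp_gen_hom_image[OF a_mult_hom subsemigroup_P] by blast

lemma sgp_gen_Rhat_generators: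
  assumes U: "U \<subseteq> P_of a" and x: "x \<in> sgp_gen U" "a * x \<in> H_of a"
  shows "x \<in> sgp_gen (U \<inter> Rhat_of a)"
proof -
  have "x \<in> sgp_gen {u \<in> U. a * u \<in> H_of a}"
  proof (rule sgp_gen_hom_filter[where T = "P_of a" and f = "(*) a"])
    show "\<And>x y. x \<in> P_of a \<Longrightarrow> y \<in> P_of a \<Longrightarrow> a * x * (a * y) \<in> H_of a \<Longrightarrow>
        a * x \<in> H_of a \<and> a * y \<in> H_of a"
      using H_factors a_mult_P_in_aSa by blast
  qed (use a_mult_hom subsemigroup_P U x in auto)
  moreover have "{u \<in> U. a * u \<in> H_of a} = U \<inter> Rhat_of a" using U Rhat_iff by blast
  ultimately show ?thesis by simp
qed

lemma relrank_le_card_non_Rhat_generators: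
  assumes U: "U \<subseteq> P_of a" "sgp_gen U = P_of a"
  shows "relrank (aSa_of a) (H_of a) \<le>o |U - Rhat_of a|"
proof -
  let ?V = "(*) a ` (U - Rhat_of a)"
  have V: "?V \<subseteq> aSa_of a" using U(1) a_mult_P_in_aSa by blast
  then have "H_of a \<union> ?V \<subseteq> aSa_of a" using H_subset_aSa by blast
  then have gen_sub: "sgp_gen (H_of a \<union> ?V) \<subseteq> aSa_of a"
    using sgp_gen_least subsemigroup_aSa by blast
  have image: "(*) a ` U \<subseteq> H_of a \<union> ?V"
  proof
    fix y assume "y \<in> (*) a ` U"
    then obtain u where "u \<in> U" "y = a * u" by blast
    then show "y \<in> H_of a \<union> ?V" using U(1) Rhat_iff by (cases "u \<in> Rhat_of a") auto
  qed
  have "aSa_of a \<subseteq> sgp_gen (H_of a \<union> ?V)"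
  proof
    fix w assume w: "w \<in> aSa_of a"
    then have "w \<in> sgp_gen U" using U(2) aSa_subset_P by blast
    then have "a * w \<in> sgp_gen (H_of a \<union> ?V)"
      using a_mult_sgp_gen[OF U(1)] sgp_gen_mono[OF image] by blast
    then show "w \<in> sgp_gen (H_of a \<union> ?V)" using aSa_left_id[OF w] by simp
  qed
  with gen_sub have "relrank (aSa_of a) (H_of a) \<le>o |?V|" using relrank_le[OF V] by blast
  then show ?thesis using ordLeq_transitive[OF _ card_of_image] by blast
qed

lemma srank_H_le_card_Rhat_generators:
  assumes U: "U \<subseteq> P_of a" "sgp_gen U = P_of a"
  shows "srank (H_of a) \<le>o |U \<inter> Rhat_of a|"
proof -
  let ?V = "(*) a ` (U \<inter> Rhat_of a)"
  have V: "?V \<subseteq> H_of a" using Rhat_iff by blast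
  have "H_of a \<subseteq> sgp_gen ?V"
  proof
    fix h assume h: "h \<in> H_of a"
    then have ah: "a * h = h" using aSa_left_id H_subset_aSa by blast
    have "h \<in> sgp_gen U" using h U(2) H_subset_P by blast
    then have "h \<in> sgp_gen (U \<inter> Rhat_of a)" using sgp_gen_Rhat_generators[OF U(1)] ah h by simp
    then have "a * h \<in> sgp_gen ?V" using a_mult_sgp_gen U(1) by blast
    then show "h \<in> sgp_gen ?V" using ah by simp
  qed
  moreover have "sgp_gen ?V \<subseteq> H_of a" using sgp_gen_least[OF V subsemigroup_H] .
  ultimately have "srank (H_of a) \<le>o |?V|" using srank_le[OF V] by blast
  then show ?thesis using ordLeq_transitive[OF _ card_of_image] by blast
qed

lemma card_RP_classes_le_card_Rhat_generators:
  assumes U: "U \<subseteq> P_of a" "sgp_gen U = P_of a"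
  shows "|RP_classes_in_Rhat a| \<le>o |U \<inter> Rhat_of a|"
proof -
  let ?class = "\<lambda>u. {y. greenR (P_of a) u y}"
  have "RP_classes_in_Rhat a \<subseteq> ?class ` (U \<inter> Rhat_of a)"
  proof
    fix C assume "C \<in> RP_classes_in_Rhat a"
    then obtain x where x: "x \<in> Rhat_of a" and C: "C = ?class x" by (rule RP_classE)
    have "x \<in> sgp_gen (U \<inter> Rhat_of a)"
      using sgp_gen_Rhat_generators U x Rhat_iff by blast
    moreover have "Rhat_of a \<subseteq> P_of a" using Rhat_iff by blast
    ultimately obtain u where u: "u \<in> U \<inter> Rhat_of a" "greenR (P_of a) u x"
      using sgp_gen_greenR_generator[OF subsemigroup_Rhat Int_lower2 _ greenR_P_mult_Rhat]
      by blast
    have "C = ?class u" using C greenR_class_eq[OF u(2)] by simp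
    then show "C \<in> ?class ` (U \<inter> Rhat_of a)" using u(1) by blast
  qed
  then show ?thesis using ordLeq_transitive[OF card_of_mono1 card_of_image] by blast
qed

lemma srank_P_lower_bounds:
  shows "relrank (aSa_of a) (H_of a) +c srank (H_of a) \<le>o srank (P_of a)"
    and "relrank (aSa_of a) (H_of a) +c |RP_classes_in_Rhat a| \<le>o srank (P_of a)"
proof -
  obtain U where U: "U \<subseteq> P_of a" "sgp_gen U = P_of a" and rank: "srank (P_of a) = |U|"
    using srank_attained[OF subsemigroup_P] by blast
  have split: "|U - Rhat_of a| +c |U \<inter> Rhat_of a| \<le>o srank (P_of a)"
    unfolding rank by (rule csum_card_of_Diff_Int)
  show "relrank (aSa_of a) (H_of a) +c srank (H_of a) \<le>o srank (P_of a)"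
    using ordLeq_transitive[OF csum_mono split] relrank_le_card_non_Rhat_generators[OF U]
      srank_H_le_card_Rhat_generators[OF U] by blast
  show "relrank (aSa_of a) (H_of a) +c |RP_classes_in_Rhat a| \<le>o srank (P_of a)"
    using ordLeq_transitive[OF csum_mono split] relrank_le_card_non_Rhat_generators[OF U]
      card_RP_classes_le_card_Rhat_generators[OF U] by blast
qed


lemma H_subset_sgp_gen:
  assumes X: "X \<subseteq> H_of a" "sgp_gen X = H_of a"
    and twisted: "\<And>x. x \<in> X \<Longrightarrow> \<exists>e. a * e = a \<and> e * x \<in> sgp_gen G"
    and y: "y \<in> H_of a" "y \<in> sgp_gen G"
  shows "H_of a \<subseteq> sgp_gen G"
proof
  fix t assume t: "t \<in> H_of a"
  obtain y' where y': "y' \<in> H_of a" "y * y' = a" using H_inverse[OF y(1)] by blast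
  have "y' * t \<in> sgp_gen X" using H_mult y'(1) t X(2) by blast
  then have "y * (y' * t) \<in> sgp_gen G"
    using aSa_mult_sgp_gen_closed[of X G] X(1) H_subset_aSa twisted y by blast
  moreover have "y * (y' * t) = t"
    using y'(2) aSa_left_id H_subset_aSa t by (auto simp: mult.assoc[symmetric])
  ultimately show "t \<in> sgp_gen G" by simp
qed

lemma a_in_Rhat: "a \<in> Rhat_of a"
  using Rhat_iff a_in_H aSa_subset_P a_in_aSa idem by auto

lemma right_identity_P_in_Rhat:
  assumes "right_identity (P_of a) e"
  shows "e \<in> Rhat_of a"
proof -
  have "e \<in> P_of a" "a * e = a"
    using assms a_in_Rhat Rhat_iff unfolding right_identity_def by auto
  then show ?thesis using Rhat_iff a_in_H by simp
qed

lemma rideal1_P_mult_aSa: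
  assumes e: "e \<in> P_of a" and p: "p \<in> rideal1 (P_of a) e"
  shows "\<exists>w\<in>aSa_of a. p = e * w"
proof -
  have "p = e \<or> (\<exists>q\<in>P_of a. p = e * q)" using p unfolding rideal1_def by blast
  moreover have "e = e * a" "\<And>q. e * q = e * (a * q)"
    using P_right_id[OF e] by (simp_all add: mult.assoc[symmetric])
  ultimately show ?thesis using a_in_aSa a_mult_P_in_aSa by metis
qed

text \<open>Each \<open>p \<in> P\<close> lies in \<open>e\<cdot>aSa\<close> for a right identity \<open>e \<in> Rhat\<close>, and
  \<open>e\<cdot>aSa \<subseteq> e'\<cdot>aSa = (e'x)(x\<^sup>-\<^sup>1\<cdot>aSa)\<close> for any \<open>e' \<R>\<^sup>P e\<close> and unit \<open>x\<close>.\<close>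
lemma P_subset_sgp_gen:
  assumes RI: "RI_dominated (P_of a)"
    and aSa: "aSa_of a \<subseteq> sgp_gen G"
    and reps: "\<And>C. C \<in> RP_classes_in_Rhat a \<Longrightarrow> \<exists>e\<in>C. \<exists>x\<in>H_of a. e * x \<in> sgp_gen G"
  shows "P_of a \<subseteq> sgp_gen G"
proof
  fix p assume "p \<in> P_of a"
  then obtain e where e: "right_identity (P_of a) e" "p \<in> rideal1 (P_of a) e"
    using RI unfolding RI_dominated_def by blast
  then have "{y. greenR (P_of a) e y} \<in> RP_classes_in_Rhat a"
    using RP_class_in_classes right_identity_P_in_Rhat by blast
  then obtain e' x where e': "greenR (P_of a) e e'" and x: "x \<in> H_of a" "e' * x \<in> sgp_gen G"
    using reps by blast
  then have "e' \<in> P_of a" "e \<in> rideal1 (P_of a) e'" using greenR_iff[OF subsemigroup_P] by auto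
  moreover from this have "p \<in> rideal1 (P_of a) e'" using rideal1_trans[OF subsemigroup_P] e(2) by blast
  ultimately obtain w where w: "w \<in> aSa_of a" "p = e' * w" using rideal1_P_mult_aSa by blast
  obtain x' where x': "x' \<in> H_of a" "x * x' = a" using H_inverse[OF x(1)] by blast
  have "(e' * x) * (x' * w) = e' * (x * x') * w" by (simp add: mult.assoc)
  also have "\<dots> = e' * a * w" using x'(2) by simp
  also have "\<dots> = p" using P_right_id[OF \<open>e' \<in> P_of a\<close>] w(2) by simp
  finally have "p = (e' * x) * (x' * w)" ..
  moreover have "x' * w \<in> sgp_gen G" using aSa aSa_mult H_subset_aSa x'(1) w(1) by blast
  ultimately show "p \<in> sgp_gen G" using sgp_gen.mult x(2) by simp
qed

lemma sgp_gen_eq_P: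
  assumes RI: "RI_dominated (P_of a)"
    and V: "V \<subseteq> aSa_of a" "sgp_gen (H_of a \<union> V) = aSa_of a"
    and X: "X \<subseteq> H_of a" "sgp_gen X = H_of a" "\<beta> ` K = X"
    and reps: "\<And>k. k \<in> K \<Longrightarrow> e k \<in> P_of a \<and> a * e k = a"
    and covers: "\<And>C. C \<in> RP_classes_in_Rhat a \<Longrightarrow> \<exists>k\<in>K. e k \<in> C"
    and k0: "k0 \<in> K" "e k0 = a"
  shows "sgp_gen (V \<union> (\<lambda>k. e k * \<beta> k) ` K) = P_of a"
proof -
  let ?G = "V \<union> (\<lambda>k. e k * \<beta> k) ` K"
  have gen: "e k * \<beta> k \<in> sgp_gen ?G" if "k \<in> K" for k
    by (rule subsetD[OF sgp_gen_superset]) (use that in blast)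
  have \<beta>: "\<beta> k \<in> H_of a" if "k \<in> K" for k
    using that X(1,3) by (auto simp: image_subset_iff)
  have "e k * \<beta> k \<in> P_of a" if "k \<in> K" for k
    using P_mult[OF conjunct1[OF reps[OF that]]] \<beta>[OF that] H_subset_P by blast
  then have "?G \<subseteq> P_of a" using V(1) aSa_subset_P by blast
  then have upper: "sgp_gen ?G \<subseteq> P_of a" using sgp_gen_least subsemigroup_P by blast
  have "H_of a \<subseteq> sgp_gen ?G"
  proof (rule H_subset_sgp_gen[OF X(1,2)])
    fix x assume "x \<in> X"
    then obtain k where k: "k \<in> K" "x = \<beta> k" unfolding X(3)[symmetric] by blast
    then have "a * e k = a" "e k * x \<in> sgp_gen ?G" using reps gen by auto
    then show "\<exists>e'. a * e' = a \<and> e' * x \<in> sgp_gen ?G" by blast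
  next
    show "\<beta> k0 \<in> H_of a" using \<beta> k0(1) .
    then show "\<beta> k0 \<in> sgp_gen ?G" using gen[OF k0(1)] k0(2) aSa_left_id H_subset_aSa by auto
  qed
  then have "H_of a \<union> V \<subseteq> sgp_gen ?G" using sgp_gen_superset by blast
  then have "aSa_of a \<subseteq> sgp_gen ?G"
    using sgp_gen_least[OF _ subsemigroup_sgp_gen] V(2) by blast
  moreover have "\<exists>e'\<in>C. \<exists>x\<in>H_of a. e' * x \<in> sgp_gen ?G" if "C \<in> RP_classes_in_Rhat a" for C
    using covers[OF that] \<beta> gen by blast
  ultimately have "P_of a \<subseteq> sgp_gen ?G" by (rule P_subset_sgp_gen[OF RI])
  with upper show ?thesis by blast
qed

lemma obtain_RP_class_reps:
  assumes \<alpha>: "\<alpha> ` K = RP_classes_in_Rhat a"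
  obtains e k0 where "\<And>k. k \<in> K \<Longrightarrow> e k \<in> P_of a \<and> a * e k = a"
    and "\<And>C. C \<in> RP_classes_in_Rhat a \<Longrightarrow> \<exists>k\<in>K. e k \<in> C"
    and "k0 \<in> K" "e k0 = a"
proof -
  define Ca where "Ca = {y. greenR (P_of a) a y}"
  have "a \<in> Ca" unfolding Ca_def using greenR_refl a_in_Rhat Rhat_iff by blast
  define e where "e k = (if \<alpha> k = Ca then a else SOME e. e \<in> \<alpha> k \<and> a * e = a)" for k
  have e: "e k \<in> \<alpha> k \<and> a * e k = a" if "k \<in> K" for k
  proof (cases "\<alpha> k = Ca")
    case False
    have "\<exists>e. e \<in> \<alpha> k \<and> a * e = a" using RP_class_has_elem_fixing_a \<alpha> that by blast
    from someI_ex[OF this] show ?thesis unfolding e_def using False by simp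
  qed (simp add: e_def \<open>a \<in> Ca\<close> idem)
  have "e k \<in> P_of a \<and> a * e k = a" if k: "k \<in> K" for k
  proof -
    have "\<alpha> k \<in> RP_classes_in_Rhat a" using k \<alpha>[symmetric] by simp
    then have "\<alpha> k \<subseteq> Rhat_of a" unfolding RP_classes_in_Rhat_def by blast
    then show ?thesis using e[OF k] Rhat_iff by auto
  qed
  moreover have "\<exists>k\<in>K. e k \<in> C" if "C \<in> RP_classes_in_Rhat a" for C
  proof -
    have "C \<in> \<alpha> ` K" using \<alpha> that by simp
    then obtain k where "k \<in> K" "C = \<alpha> k" by blast
    then show ?thesis using e by blast
  qed
  moreover have "Ca \<in> \<alpha> ` K" unfolding \<alpha> Ca_def by (rule RP_class_in_classes[OF a_in_Rhat])
  then obtain k0 where "k0 \<in> K" "e k0 = a" unfolding e_def by force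
  ultimately show ?thesis by (rule that)
qed

lemma srank_P_le_csum:
  assumes RI: "RI_dominated (P_of a)"
    and K: "|RP_classes_in_Rhat a| \<le>o |K|" "srank (H_of a) \<le>o |K|"
  shows "srank (P_of a) \<le>o relrank (aSa_of a) (H_of a) +c |K|"
proof -
  obtain V where V: "V \<subseteq> aSa_of a" "sgp_gen (H_of a \<union> V) = aSa_of a"
      and relrank: "relrank (aSa_of a) (H_of a) = |V|"
    using relrank_attained[OF H_subset_aSa subsemigroup_aSa] by blast
  obtain X where X: "X \<subseteq> H_of a" "sgp_gen X = H_of a" and srank: "srank (H_of a) = |X|"
    using srank_attained[OF subsemigroup_H] by blast
  have "X \<noteq> {}" using X(2) a_in_H sgp_gen_empty by auto
  moreover have "|X| \<le>o |K|" using K(2) srank by simp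
  ultimately obtain \<beta> where \<beta>: "\<beta> ` K = X" using card_of_ordLeq2[THEN iffD2] by metis
  have "RP_classes_in_Rhat a \<noteq> {}" using RP_class_in_classes[OF a_in_Rhat] by blast
  then obtain \<alpha> where \<alpha>: "\<alpha> ` K = RP_classes_in_Rhat a"
    using card_of_ordLeq2[THEN iffD2] K(1) by metis
  obtain e k0 where reps: "\<And>k. k \<in> K \<Longrightarrow> e k \<in> P_of a \<and> a * e k = a"
    and covers: "\<And>C. C \<in> RP_classes_in_Rhat a \<Longrightarrow> \<exists>k\<in>K. e k \<in> C"
    and k0: "k0 \<in> K" "e k0 = a"
    using obtain_RP_class_reps[OF \<alpha>] by blast
  let ?Z = "(\<lambda>k. e k * \<beta> k) ` K"
  have gen: "sgp_gen (V \<union> ?Z) = P_of a"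
    using sgp_gen_eq_P[where e = e and \<beta> = \<beta> and K = K, OF RI V X \<beta> reps covers k0] .
  have "V \<union> ?Z \<subseteq> P_of a" using sgp_gen_superset[of "V \<union> ?Z"] unfolding gen .
  then have "srank (P_of a) \<le>o |V \<union> ?Z|" using gen by (rule srank_le)
  also have "|V \<union> ?Z| \<le>o |V| +c |?Z|" by (rule Un_csum)
  also have "|V| +c |?Z| \<le>o |V| +c |K|" by (rule csum_mono2[OF card_of_image])
  finally show ?thesis unfolding relrank .
qed

end

theorem theorem3p27:
  fixes a :: "'a::semigroup_mult"
  assumes idem: "a * a = a"
      and reg: "aSa_of a \<subseteq> Reg"
      and ideal: "ideal_of (aSa_of a) (aSa_of a - H_of a)"
  shows "csum_max_leq (relrank (aSa_of a) (H_of a))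
           (card_of (RP_classes_in_Rhat a)) (srank (H_of a)) (srank (P_of a))
         \<and> (RI_dominated (P_of a) \<longrightarrow>
            csum_max_iso (relrank (aSa_of a) (H_of a))
              (card_of (RP_classes_in_Rhat a)) (srank (H_of a)) (srank (P_of a)))"
proof -
  interpret idempotent_nonunits_ideal a using idem ideal by unfold_locales
  let ?r = "relrank (aSa_of a) (H_of a)" and ?cls = "RP_classes_in_Rhat a"
  note lower = srank_P_lower_bounds
  obtain X where X: "srank (H_of a) = |X|" using srank_attained[OF subsemigroup_H] by blast
  have "srank (P_of a) =o ?r +c |?cls|"
    if "RI_dominated (P_of a)" "\<not> |?cls| \<le>o srank (H_of a)"
  proof -
    have "srank (H_of a) \<le>o |?cls|" using that(2) unfolding X
      by (simp add: not_ordLeq_iff_ordLess[OF card_of_Well_order card_of_Well_order] ordLess_imp_ordLeq)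
    then show ?thesis
      using srank_P_le_csum[OF that(1) ordLeq_refl[OF card_of_Card_order]] lower(2)
      by (simp add: ordIso_iff_ordLeq)
  qed
  moreover have "srank (P_of a) =o ?r +c srank (H_of a)"
    if "RI_dominated (P_of a)" "|?cls| \<le>o srank (H_of a)"
    using srank_P_le_csum[OF that(1), of X] that(2) lower(1) unfolding X
    by (simp add: ordIso_iff_ordLeq ordLeq_refl[OF card_of_Card_order])
  ultimately show ?thesis
    using lower unfolding csum_max_leq_def csum_max_iso_def by auto
qed

end
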